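(* There exist Pauli Hamiltonians $H$, with $m$ (the number of groups of the sorted insertion grouping) arbitrarily large, such that sorted insertion produces a grouping $\mathcal{G}$ of $H$ with $m$ groups and there is another grouping $\mathcal{G}'$ of $H$ with $V(\mathcal{G})/V(\mathcal{G}')=\Theta(m)$, where for a grouping $\mathcal{G}=(G^{[1]},\dots,G^{[k]})$ and fixed total budget $M$, $V(\mathcal{G})=\min\{\sum_jS_j/M_j:\ M_j>0,\ \sum_jM_j=M\}=(\sum_j\sqrt{S_j})^2/M$ with $S_j=\sum_{i:P_i\in G^{[j]}}c_i^2$.
   Context: A Pauli Hamiltonian is $H=\sum_{i=1}^Nc_iP_i$ with real nonzero $c_i$ and distinct $n$-qubit Pauli strings. A grouping is a list of pairwise disjoint sets of mutually commuting Pauli terms of $H$ covering all terms. Sorted insertion: order the terms by decreasing $|c_i|$ and insert each in turn into the first existing group whose members all commute with it, creating a new group otherwise. $V(\mathcal{G})$ is the variance of the grouped energy estimator under optimal allocation of $M$ shots across groups in the state-independent model where each Pauli has variance $1$ and all covariances vanish (as for the maximally mixed state). *)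

theory Defs
  imports Complex_Main
begin

datatype pauli = PI | PX | PY | PZ

type_synonym pstring = "pauli list"

text \<open>Two Pauli strings commute iff the number of positions where both are
non-identity and different is even.\<close>
definition anticomm_count :: "pstring \<Rightarrow> pstring \<Rightarrow> nat" where
  "anticomm_count P Q =
     length (filter (\<lambda>(a,b). a \<noteq> PI \<and> b \<noteq> PI \<and> a \<noteq> b) (zip P Q))"

definition commute :: "pstring \<Rightarrow> pstring \<Rightarrow> bool" where
  "commute P Q \<longleftrightarrow> even (anticomm_count P Q)"

text \<open>A Pauli Hamiltonian H = sum over P in T of c P * P: T is a finite set of
distinct n-qubit Pauli strings, each with a real nonzero coefficient.\<close>
definition pauli_hamiltonian :: "nat \<Rightarrow> pstring set \<Rightarrow> (pstring \<Rightarrow> real) \<Rightarrow> bool" where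
  "pauli_hamiltonian n T c \<longleftrightarrow> finite T \<and> T \<noteq> {} \<and>
     (\<forall>P\<in>T. length P = n \<and> c P \<noteq> 0)"

definition grouping :: "pstring set \<Rightarrow> pstring set list \<Rightarrow> bool" where
  "grouping T G \<longleftrightarrow>
     (\<forall>j<length G. G ! j \<noteq> {} \<and> (\<forall>P\<in>G ! j. \<forall>Q\<in>G ! j. commute P Q)) \<and>
     (\<forall>i<length G. \<forall>j<length G. i \<noteq> j \<longrightarrow> G ! i \<inter> G ! j = {}) \<and>
     (\<Union>j<length G. G ! j) = T"

fun si_insert :: "pstring \<Rightarrow> pstring set list \<Rightarrow> pstring set list" where
  "si_insert P [] = [{P}]"
| "si_insert P (g # gs) =
     (if (\<forall>Q\<in>g. commute P Q) then insert P g # gs else g # si_insert P gs)"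

definition sorted_insertion :: "pstring list \<Rightarrow> pstring set list" where
  "sorted_insertion xs = fold si_insert xs []"

definition sorted_order :: "pstring set \<Rightarrow> (pstring \<Rightarrow> real) \<Rightarrow> pstring list \<Rightarrow> bool" where
  "sorted_order T c xs \<longleftrightarrow> distinct xs \<and> set xs = T \<and>
     sorted_wrt (\<lambda>P Q. \<bar>c P\<bar> \<ge> \<bar>c Q\<bar>) xs"

definition grp_S :: "(pstring \<Rightarrow> real) \<Rightarrow> pstring set \<Rightarrow> real" where
  "grp_S c g = (\<Sum>P\<in>g. (c P)\<^sup>2)"

definition Var :: "(pstring \<Rightarrow> real) \<Rightarrow> real \<Rightarrow> pstring set list \<Rightarrow> real" where
  "Var c M G = Inf {(\<Sum>j<length G. grp_S c (G ! j) / Mj j) | Mj.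
       (\<forall>j<length G. Mj j > 0) \<and> (\<Sum>j<length G. Mj j) = M}"

end

theory Submission
  imports Defs
begin

(* Take m heavy terms D_k with coefficient 2 that pairwise anticommute, and m^2 light terms
   C_jl with coefficient 1 that commute with each other, where C_jl commutes with D_k iff j = k.
   Sorted insertion puts every D_k into a group of its own and then each C_jl into the group of
   D_j, giving m groups with S = 4 + m each, so V = m^2 (4 + m) / M.  Putting all light terms
   into one group and leaving the heavy terms as singletons gives V = (m + 2 m)^2 / M instead,
   so the ratio is (4 + m) / 9.  The closed form V = (sum_j sqrt S_j)^2 / M of the optimal
   allocation is Cauchy-Schwarz. *)

lemma tangent_bound_div:
  fixes S x t :: real
  assumes "S \<ge> 0" "x > 0"
  shows "2 * t * sqrt S - t\<^sup>2 * x \<le> S / x"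
proof -
  have "S / x - (2 * t * sqrt S - t\<^sup>2 * x) = (sqrt S - t * x)\<^sup>2 / x"
    using assms by (simp add: field_simps power2_eq_square)
  moreover have "(sqrt S - t * x)\<^sup>2 / x \<ge> 0"
    using assms by simp
  ultimately show ?thesis
    by linarith
qed

lemma Inf_sum_div_allocation:
  fixes S :: "nat \<Rightarrow> real"
  assumes "N > 0" and S_pos: "\<forall>j<N. S j > 0" and "M > 0"
  shows "Inf {(\<Sum>j<N. S j / Mj j) | Mj. (\<forall>j<N. Mj j > 0) \<and> (\<Sum>j<N. Mj j) = M}
           = (\<Sum>j<N. sqrt (S j))\<^sup>2 / M"
proof (rule cInf_eq_minimum)
  define Q where "Q = (\<Sum>j<N. sqrt (S j))"
  have "Q > 0"
    unfolding Q_def using assms by (intro sum_pos) auto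
  define Mopt where "Mopt j = M * sqrt (S j) / Q" for j
  have "(\<Sum>j<N. Mopt j) = M"
    using \<open>Q > 0\<close> by (simp add: Mopt_def Q_def flip: sum_divide_distrib sum_distrib_left)
  moreover have "\<forall>j<N. Mopt j > 0"
    using S_pos \<open>M > 0\<close> \<open>Q > 0\<close> by (simp add: Mopt_def)
  moreover have "(\<Sum>j<N. S j / Mopt j) = (\<Sum>j<N. sqrt (S j) * Q / M)"
  proof (rule sum.cong [OF refl])
    fix j assume "j \<in> {..<N}"
    then have "S j > 0"
      using S_pos by simp
    then show "S j / Mopt j = sqrt (S j) * Q / M"
      using \<open>M > 0\<close> \<open>Q > 0\<close> real_sqrt_mult_self [of "S j"]
      by (simp add: Mopt_def field_simps)
  qed
  moreover have "(\<Sum>j<N. sqrt (S j) * Q / M) = Q\<^sup>2 / M"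
    by (simp add: Q_def power2_eq_square flip: sum_divide_distrib sum_distrib_right)
  ultimately have "Q\<^sup>2 / M
      \<in> {(\<Sum>j<N. S j / Mj j) | Mj. (\<forall>j<N. Mj j > 0) \<and> (\<Sum>j<N. Mj j) = M}"
    by (intro CollectI exI [of _ Mopt]) simp
  then show "(\<Sum>j<N. sqrt (S j))\<^sup>2 / M
      \<in> {(\<Sum>j<N. S j / Mj j) | Mj. (\<forall>j<N. Mj j > 0) \<and> (\<Sum>j<N. Mj j) = M}"
    unfolding Q_def .
next
  fix y
  assume "y \<in> {(\<Sum>j<N. S j / Mj j) | Mj. (\<forall>j<N. Mj j > 0) \<and> (\<Sum>j<N. Mj j) = M}"
  then obtain Mj where y: "y = (\<Sum>j<N. S j / Mj j)"
    and Mj_pos: "\<forall>j<N. Mj j > 0" and Mj_sum: "(\<Sum>j<N. Mj j) = M"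
    by blast
  define t where "t = (\<Sum>j<N. sqrt (S j)) / M"
  \<comment> \<open>Summing the tangent bound at the optimal slope t gives the matching lower bound.\<close>
  have "(\<Sum>j<N. 2 * t * sqrt (S j) - t\<^sup>2 * Mj j) \<le> y"
    unfolding y using S_pos Mj_pos by (intro sum_mono tangent_bound_div) auto
  moreover have "(\<Sum>j<N. 2 * t * sqrt (S j) - t\<^sup>2 * Mj j)
      = 2 * t * (\<Sum>j<N. sqrt (S j)) - t\<^sup>2 * M"
    by (simp add: sum_subtractf Mj_sum flip: sum_distrib_left)
  moreover have "\<dots> = (\<Sum>j<N. sqrt (S j))\<^sup>2 / M"
    using \<open>M > 0\<close> by (simp add: t_def field_simps power2_eq_square)
  ultimately show "(\<Sum>j<N. sqrt (S j))\<^sup>2 / M \<le> y"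
    by simp
qed

lemma Var_eq_sum_sqrt:
  assumes "G \<noteq> []" "\<forall>g\<in>set G. grp_S c g > 0" "M > 0"
  shows "Var c M G = (\<Sum>g\<leftarrow>G. sqrt (grp_S c g))\<^sup>2 / M"
proof -
  have "(\<Sum>g\<leftarrow>G. sqrt (grp_S c g)) = (\<Sum>j<length G. sqrt (grp_S c (G ! j)))"
    by (simp add: sum_list_sum_nth atLeast0LessThan)
  then show ?thesis
    unfolding Var_def using assms
    by (simp add: Inf_sum_div_allocation [of "length G" "\<lambda>j. grp_S c (G ! j)" M])
qed

lemma commute_refl: "commute P P"
  by (simp add: commute_def anticomm_count_def zip_same_conv_map filter_map o_def)

lemma groupingI:
  assumes "\<forall>g\<in>set G. g \<noteq> {} \<and> (\<forall>P\<in>g. \<forall>Q\<in>g. commute P Q)"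
    and "distinct G" and "pairwise disjnt (set G)" and "\<Union> (set G) = T"
  shows "grouping T G"
  unfolding grouping_def
proof (intro conjI allI impI)
  show "G ! j \<noteq> {}" "\<forall>P\<in>G ! j. \<forall>Q\<in>G ! j. commute P Q" if "j < length G" for j
    using assms(1) nth_mem [OF that] by blast+
  show "G ! i \<inter> G ! j = {}" if "i < length G" "j < length G" "i \<noteq> j" for i j
    using assms(2,3) that by (auto simp: nth_eq_iff_index_eq pairwise_def disjnt_def)
  show "(\<Union>j<length G. G ! j) = T"
    using assms(4) by (auto simp: set_conv_nth)
qed

lemma si_insert_new_group:
  "\<forall>g\<in>set gs. \<exists>Q\<in>g. \<not> commute P Q \<Longrightarrow> si_insert P gs = gs @ [{P}]"
  by (induction gs) auto

lemma fold_si_insert_anticommuting: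
  assumes "distinct ds"
    and "\<forall>P\<in>set ds. \<forall>Q\<in>set ds. P \<noteq> Q \<longrightarrow> \<not> commute P Q"
    and "\<forall>g\<in>set gs. \<forall>P\<in>set ds. \<exists>Q\<in>g. \<not> commute P Q"
  shows "fold si_insert ds gs = gs @ map (\<lambda>d. {d}) ds"
  using assms
proof (induction ds arbitrary: gs)
  case Nil
  then show ?case by simp
next
  case (Cons d ds)
  have "si_insert d gs = gs @ [{d}]"
    using Cons.prems(3) by (intro si_insert_new_group) simp
  moreover have "fold si_insert ds (gs @ [{d}]) = (gs @ [{d}]) @ map (\<lambda>d. {d}) ds"
    using Cons.prems by (intro Cons.IH) auto
  ultimately show ?case
    by simp
qed

lemma si_insert_unique_anchor:
  assumes "distinct ds" and "\<exists>!d. d \<in> set ds \<and> commute x d"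
    and "\<forall>d\<in>set ds. \<forall>y\<in>F d. commute x y"
  shows "si_insert x (map (\<lambda>d. insert d (F d)) ds)
           = map (\<lambda>d. insert d (if commute x d then insert x (F d) else F d)) ds"
  using assms
proof (induction ds)
  case Nil
  then show ?case by auto
next
  case (Cons d ds)
  show ?case
  proof (cases "commute x d")
    case True
    then have "\<forall>d'\<in>set ds. \<not> commute x d'"
      using Cons.prems(1,2) by auto
    then show ?thesis
      using True Cons.prems(3) by (simp add: insert_commute)
  next
    case False
    then show ?thesis
      using Cons by auto
  qed
qed

lemma fold_si_insert_unique_anchor:
  assumes "distinct ds" and "\<forall>x\<in>set cs. \<exists>!d. d \<in> set ds \<and> commute x d"
    and "\<forall>x\<in>set cs. \<forall>y\<in>set cs. commute x y"
    and "\<forall>x\<in>set cs. \<forall>d\<in>set ds. \<forall>y\<in>F d. commute x y"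
  shows "fold si_insert cs (map (\<lambda>d. insert d (F d)) ds)
           = map (\<lambda>d. insert d (F d \<union> {x \<in> set cs. commute x d})) ds"
  using assms(2-4)
proof (induction cs arbitrary: F)
  case Nil
  then show ?case by simp
next
  case (Cons x cs)
  define F' where "F' d = (if commute x d then insert x (F d) else F d)" for d
  have "si_insert x (map (\<lambda>d. insert d (F d)) ds) = map (\<lambda>d. insert d (F' d)) ds"
    unfolding F'_def using assms(1) Cons.prems by (intro si_insert_unique_anchor) auto
  moreover have "fold si_insert cs (map (\<lambda>d. insert d (F' d)) ds)
      = map (\<lambda>d. insert d (F' d \<union> {x \<in> set cs. commute x d})) ds"
    using Cons.prems by (intro Cons.IH) (auto simp: F'_def)
  ultimately show ?case
    by (auto simp: F'_def)
qed

lemma sorted_wrt_eq_filter_append: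
  assumes "sorted_wrt R xs" and "\<forall>x\<in>set xs. \<forall>y\<in>set xs. \<not> p x \<longrightarrow> p y \<longrightarrow> \<not> R x y"
  shows "xs = filter p xs @ filter (\<lambda>x. \<not> p x) xs"
  using assms
proof (induction xs)
  case Nil
  then show ?case by simp
next
  case (Cons x xs)
  show ?case
  proof (cases "p x")
    case True
    then show ?thesis
      using Cons by simp
  next
    case False
    then have "\<forall>y\<in>set xs. \<not> p y"
      using Cons.prems by auto
    then show ?thesis
      using False by (simp add: filter_id_conv)
  qed
qed

lemma sorted_insertion_append:
  assumes "distinct ds" and "\<forall>P\<in>set ds. \<forall>Q\<in>set ds. P \<noteq> Q \<longrightarrow> \<not> commute P Q"
    and "\<forall>x\<in>set cs. \<exists>!d. d \<in> set ds \<and> commute x d"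
    and "\<forall>x\<in>set cs. \<forall>y\<in>set cs. commute x y"
  shows "sorted_insertion (ds @ cs) = map (\<lambda>d. insert d {x \<in> set cs. commute x d}) ds"
proof -
  have "fold si_insert ds [] = map (\<lambda>d. insert d {}) ds"
    using assms(1,2) by (simp add: fold_si_insert_anticommuting)
  then show ?thesis
    using fold_si_insert_unique_anchor [OF assms(1,3,4), of "\<lambda>_. {}"]
    by (simp add: sorted_insertion_def)
qed

definition anticomm_site :: "pauli \<Rightarrow> pauli \<Rightarrow> bool" where
  "anticomm_site a b \<longleftrightarrow> a \<noteq> PI \<and> b \<noteq> PI \<and> a \<noteq> b"

lemma commute_map_upt_iff:
  "commute (map f [0..<n]) (map g [0..<n])
     \<longleftrightarrow> even (card {i. i < n \<and> anticomm_site (f i) (g i)})"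
  unfolding commute_def anticomm_count_def anticomm_site_def
  by (simp add: zip_map_map zip_same_conv_map filter_map length_filter_conv_card o_def
      cong: conj_cong)

(* The 3 m qubits form three blocks of m.  D_k is Z on the first k qubits of the first block,
   X on its k-th qubit and X on the k-th qubit of the second block; C_jl is Z on the second block
   except its j-th qubit, plus Z on the l-th qubit of the third block, which only serves to make
   the m^2 light terms distinct. *)
definition heavy_site :: "nat \<Rightarrow> nat \<Rightarrow> nat \<Rightarrow> pauli" where
  "heavy_site m k i = (if i < k then PZ else if i = k \<or> i = m + k then PX else PI)"

definition light_site :: "nat \<Rightarrow> nat \<Rightarrow> nat \<Rightarrow> nat \<Rightarrow> pauli" where
  "light_site m j l i = (if m \<le> i \<and> i < 2 * m \<and> i \<noteq> m + j \<or> i = 2 * m + l then PZ else PI)"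

definition heavy :: "nat \<Rightarrow> nat \<Rightarrow> pstring" where
  "heavy m k = map (heavy_site m k) [0..<3 * m]"

definition light :: "nat \<Rightarrow> nat \<Rightarrow> nat \<Rightarrow> pstring" where
  "light m j l = map (light_site m j l) [0..<3 * m]"

lemma heavy_anticommute:
  assumes "k < m" "k' < m" "k \<noteq> k'"
  shows "\<not> commute (heavy m k) (heavy m k')"
proof -
  have "{i. i < 3 * m \<and> anticomm_site (heavy_site m k i) (heavy_site m k' i)} = {min k k'}"
    using assms by (auto simp: anticomm_site_def heavy_site_def)
  then show ?thesis
    by (simp add: heavy_def commute_map_upt_iff)
qed

lemma light_commute: "commute (light m j l) (light m j' l')"
proof -
  have no_sites: "{i. i < 3 * m \<and> anticomm_site (light_site m j l i) (light_site m j' l' i)} = {}"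
    by (auto simp: anticomm_site_def light_site_def)
  show ?thesis
    unfolding light_def commute_map_upt_iff no_sites by simp
qed

lemma light_heavy_commute_iff:
  assumes "j < m" "k < m"
  shows "commute (light m j l) (heavy m k) \<longleftrightarrow> k = j"
proof -
  have "{i. i < 3 * m \<and> anticomm_site (light_site m j l i) (heavy_site m k i)}
          = (if k = j then {} else {m + k})"
    using assms by (auto simp: anticomm_site_def light_site_def heavy_site_def)
  then show ?thesis
    by (simp add: light_def heavy_def commute_map_upt_iff)
qed

lemma nth_heavy: "i < 3 * m \<Longrightarrow> heavy m k ! i = heavy_site m k i"
  by (simp add: heavy_def)

lemma nth_light: "i < 3 * m \<Longrightarrow> light m j l ! i = light_site m j l i"
  by (simp add: light_def)

lemma inj_on_heavy: "inj_on (heavy m) {..<m}"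
proof (rule inj_onI)
  fix k k' assume "k \<in> {..<m}" "k' \<in> {..<m}" "heavy m k = heavy m k'"
  moreover have "min k k' < 3 * m"
    using \<open>k \<in> {..<m}\<close> by auto
  ultimately have "heavy_site m k (min k k') = heavy_site m k' (min k k')"
    by (metis nth_heavy)
  then show "k = k'"
    by (auto simp: heavy_site_def split: if_splits)
qed

lemma inj_on_light: "inj_on (\<lambda>(j, l). light m j l) ({..<m} \<times> {..<m})"
proof (rule inj_onI, clarify)
  fix j l j' l' assume "j < m" "l < m" "j' < m" "l' < m" and eq: "light m j l = light m j' l'"
  have "light_site m j l (m + j) = light_site m j' l' (m + j)"
    using arg_cong [OF eq, of "\<lambda>P. P ! (m + j)"] \<open>j < m\<close> by (simp add: nth_light)
  moreover have "light_site m j l (2 * m + l) = light_site m j' l' (2 * m + l)"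
    using arg_cong [OF eq, of "\<lambda>P. P ! (2 * m + l)"] \<open>l < m\<close> by (simp add: nth_light)
  ultimately show "j = j' \<and> l = l'"
    using \<open>j < m\<close> \<open>j' < m\<close> by (auto simp: light_site_def split: if_splits)
qed

lemma heavy_ne_light:
  assumes "k < m"
  shows "heavy m k \<noteq> light m j l"
proof
  assume eq: "heavy m k = light m j l"
  have "heavy_site m k k = light_site m j l k"
    using arg_cong [OF eq, of "\<lambda>P. P ! k"] assms by (simp add: nth_heavy nth_light)
  then show False
    using assms by (simp add: heavy_site_def light_site_def)
qed

definition heavy_terms :: "nat \<Rightarrow> pstring set" where
  "heavy_terms m = heavy m ` {..<m}"

definition light_terms :: "nat \<Rightarrow> pstring set" where
  "light_terms m = (\<lambda>(j, l). light m j l) ` ({..<m} \<times> {..<m})"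

definition ham_terms :: "nat \<Rightarrow> pstring set" where
  "ham_terms m = heavy_terms m \<union> light_terms m"

definition ham_coeff :: "nat \<Rightarrow> pstring \<Rightarrow> real" where
  "ham_coeff m P = (if P \<in> heavy_terms m then 2 else 1)"

lemma heavy_notin_light_terms: "k < m \<Longrightarrow> heavy m k \<notin> light_terms m"
  by (auto simp: light_terms_def heavy_ne_light)

lemma heavy_terms_disjoint_light_terms: "heavy_terms m \<inter> light_terms m = {}"
  by (auto simp: heavy_terms_def heavy_notin_light_terms)

lemma light_in_light_terms: "j < m \<Longrightarrow> l < m \<Longrightarrow> light m j l \<in> light_terms m"
  by (auto simp: light_terms_def)

lemma ham_coeff_light: "P \<in> light_terms m \<Longrightarrow> ham_coeff m P = 1"
  using heavy_terms_disjoint_light_terms by (auto simp: ham_coeff_def)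

lemma pauli_hamiltonian_ham: "m > 0 \<Longrightarrow> pauli_hamiltonian (3 * m) (ham_terms m) (ham_coeff m)"
  by (auto simp: pauli_hamiltonian_def ham_terms_def heavy_terms_def light_terms_def
      ham_coeff_def heavy_def light_def)

lemma light_terms_commuting_heavy:
  assumes "k < m"
  shows "{x \<in> light_terms m. commute x (heavy m k)} = light m k ` {..<m}"
  using assms by (auto simp: light_terms_def light_heavy_commute_iff)

lemma sorted_insertion_ham:
  assumes "sorted_order (ham_terms m) (ham_coeff m) xs"
  obtains ds where "distinct ds" "set ds = heavy_terms m"
    "sorted_insertion xs = map (\<lambda>d. insert d {x \<in> light_terms m. commute x d}) ds"
proof
  define ds where "ds = filter (\<lambda>P. P \<in> heavy_terms m) xs"
  define cs where "cs = filter (\<lambda>P. P \<notin> heavy_terms m) xs"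
  have "distinct xs" and set_xs: "set xs = ham_terms m"
    and sorted: "sorted_wrt (\<lambda>P Q. \<bar>ham_coeff m P\<bar> \<ge> \<bar>ham_coeff m Q\<bar>) xs"
    using assms by (auto simp: sorted_order_def)
  then show "distinct ds" "set ds = heavy_terms m"
    by (auto simp: ds_def ham_terms_def)
  have set_cs: "set cs = light_terms m"
    using set_xs heavy_terms_disjoint_light_terms by (auto simp: cs_def ham_terms_def)
  have "xs = ds @ cs"
    unfolding ds_def cs_def
    using sorted by (rule sorted_wrt_eq_filter_append) (auto simp: ham_coeff_def)
  moreover have "sorted_insertion (ds @ cs) = map (\<lambda>d. insert d {x \<in> set cs. commute x d}) ds"
  proof (rule sorted_insertion_append)
    show "\<forall>P\<in>set ds. \<forall>Q\<in>set ds. P \<noteq> Q \<longrightarrow> \<not> commute P Q"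
      using \<open>set ds = heavy_terms m\<close> by (auto simp: heavy_terms_def) (metis heavy_anticommute)
    show "\<forall>x\<in>set cs. \<exists>!d. d \<in> set ds \<and> commute x d"
      using \<open>set ds = heavy_terms m\<close> set_cs
      by (auto simp: heavy_terms_def light_terms_def light_heavy_commute_iff)
    show "\<forall>x\<in>set cs. \<forall>y\<in>set cs. commute x y"
      using set_cs by (auto simp: light_terms_def light_commute)
  qed (fact \<open>distinct ds\<close>)
  ultimately show "sorted_insertion xs = map (\<lambda>d. insert d {x \<in> light_terms m. commute x d}) ds"
    using set_cs by simp
qed

lemma card_heavy_terms: "card (heavy_terms m) = m"
  using inj_on_heavy by (simp add: heavy_terms_def card_image)

lemma card_light_row:
  assumes "k < m"
  shows "card (light m k ` {..<m}) = m"
proof -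
  have "inj_on (light m k) {..<m}"
    using assms inj_onD [OF inj_on_light, of m "(k, _)" "(k, _)"] by (auto intro!: inj_onI)
  then show ?thesis
    by (simp add: card_image)
qed

lemma grp_S_sorted_insertion_group:
  assumes "d \<in> heavy_terms m"
  shows "grp_S (ham_coeff m) (insert d {x \<in> light_terms m. commute x d}) = 4 + real m"
proof -
  obtain k where "k < m" and d: "d = heavy m k"
    using assms by (auto simp: heavy_terms_def)
  then have row: "{x \<in> light_terms m. commute x d} = light m k ` {..<m}"
    by (simp add: light_terms_commuting_heavy)
  have "d \<notin> light m k ` {..<m}"
    using \<open>k < m\<close> d by (auto simp: heavy_ne_light)
  moreover have "(\<Sum>P\<in>light m k ` {..<m}. (ham_coeff m P)\<^sup>2) = (\<Sum>P\<in>light m k ` {..<m}. 1)"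
    using \<open>k < m\<close> by (intro sum.cong) (auto simp: ham_coeff_light light_in_light_terms)
  moreover have "(\<Sum>P\<in>light m k ` {..<m}. 1 :: real) = real m"
    using card_light_row [OF \<open>k < m\<close>] by simp
  ultimately show ?thesis
    using assms by (simp add: grp_S_def row ham_coeff_def)
qed

lemma length_sorted_insertion_ham:
  assumes "sorted_order (ham_terms m) (ham_coeff m) xs"
  shows "length (sorted_insertion xs) = m"
proof -
  obtain ds where "distinct ds" "set ds = heavy_terms m"
    "sorted_insertion xs = map (\<lambda>d. insert d {x \<in> light_terms m. commute x d}) ds"
    using sorted_insertion_ham [OF assms] .
  then show ?thesis
    using distinct_card card_heavy_terms by fastforce
qed

lemma Var_sorted_insertion_ham:
  assumes "sorted_order (ham_terms m) (ham_coeff m) xs" "m > 0" "M > 0"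
  shows "Var (ham_coeff m) M (sorted_insertion xs) = (real m)\<^sup>2 * (4 + real m) / M"
proof -
  obtain ds where "distinct ds" "set ds = heavy_terms m"
    and SI: "sorted_insertion xs = map (\<lambda>d. insert d {x \<in> light_terms m. commute x d}) ds"
    using sorted_insertion_ham [OF assms(1)] .
  then have "length ds = m"
    using distinct_card card_heavy_terms by fastforce
  have "Var (ham_coeff m) M (sorted_insertion xs)
      = (\<Sum>g\<leftarrow>sorted_insertion xs. sqrt (grp_S (ham_coeff m) g))\<^sup>2 / M"
    using assms \<open>length ds = m\<close> \<open>set ds = heavy_terms m\<close>
    by (intro Var_eq_sum_sqrt) (auto simp: SI grp_S_sorted_insertion_group)
  also have "(\<Sum>g\<leftarrow>sorted_insertion xs. sqrt (grp_S (ham_coeff m) g)) = (\<Sum>d\<leftarrow>ds. sqrt (4 + real m))"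
    unfolding SI map_map o_def using \<open>set ds = heavy_terms m\<close>
    by (intro arg_cong [where f = sum_list] map_cong refl) (simp add: grp_S_sorted_insertion_group)
  also have "\<dots> = real m * sqrt (4 + real m)"
    using \<open>length ds = m\<close> by (simp add: sum_list_triv)
  finally show ?thesis
    by (simp add: power_mult_distrib)
qed

definition light_first_grouping :: "nat \<Rightarrow> pstring set list" where
  "light_first_grouping m = light_terms m # map (\<lambda>k. {heavy m k}) [0..<m]"

lemma grouping_light_first_grouping:
  assumes "m > 0"
  shows "grouping (ham_terms m) (light_first_grouping m)"
  unfolding light_first_grouping_def
proof (rule groupingI)
  have "light m 0 0 \<in> light_terms m"
    using assms by (simp add: light_in_light_terms)
  then show "\<forall>g\<in>set (light_terms m # map (\<lambda>k. {heavy m k}) [0..<m]).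
      g \<noteq> {} \<and> (\<forall>P\<in>g. \<forall>Q\<in>g. commute P Q)"
    by (auto simp: light_terms_def light_commute commute_refl)
  show "distinct (light_terms m # map (\<lambda>k. {heavy m k}) [0..<m])"
    using \<open>light m 0 0 \<in> light_terms m\<close> inj_on_heavy
    by (auto simp: distinct_map inj_on_def heavy_ne_light [symmetric])
  show "pairwise disjnt (set (light_terms m # map (\<lambda>k. {heavy m k}) [0..<m]))"
    by (auto simp: pairwise_def disjnt_def heavy_notin_light_terms)
  show "\<Union> (set (light_terms m # map (\<lambda>k. {heavy m k}) [0..<m])) = ham_terms m"
    by (auto simp: ham_terms_def heavy_terms_def)
qed

lemma grp_S_light_terms: "grp_S (ham_coeff m) (light_terms m) = real m * real m"
proof -
  have "grp_S (ham_coeff m) (light_terms m) = (\<Sum>P\<in>light_terms m. 1)"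
    unfolding grp_S_def by (intro sum.cong) (auto simp: ham_coeff_light)
  also have "\<dots> = real m * real m"
    using inj_on_light by (simp add: light_terms_def card_image card_cartesian_product)
  finally show ?thesis .
qed

lemma grp_S_heavy: "k < m \<Longrightarrow> grp_S (ham_coeff m) {heavy m k} = 4"
  by (simp add: grp_S_def ham_coeff_def heavy_terms_def)

lemma Var_light_first_grouping:
  assumes "m > 0" "M > 0"
  shows "Var (ham_coeff m) M (light_first_grouping m) = 9 * (real m)\<^sup>2 / M"
proof -
  have "Var (ham_coeff m) M (light_first_grouping m)
      = (\<Sum>g\<leftarrow>light_first_grouping m. sqrt (grp_S (ham_coeff m) g))\<^sup>2 / M"
    using assms by (intro Var_eq_sum_sqrt)
      (auto simp: light_first_grouping_def grp_S_light_terms grp_S_heavy)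
  also have "(\<Sum>g\<leftarrow>light_first_grouping m. sqrt (grp_S (ham_coeff m) g)) = 3 * real m"
  proof -
    have "(\<Sum>k\<leftarrow>[0..<m]. sqrt (grp_S (ham_coeff m) {heavy m k})) = (\<Sum>k\<leftarrow>[0..<m]. 2)"
      by (intro arg_cong [where f = sum_list] map_cong refl) (simp add: grp_S_heavy)
    then show ?thesis
      by (simp add: light_first_grouping_def grp_S_light_terms o_def sum_list_triv)
  qed
  finally show ?thesis
    by (simp add: power_mult_distrib)
qed

lemma Var_ratio_ham:
  assumes "sorted_order (ham_terms m) (ham_coeff m) xs" "m > 0" "M > 0"
  shows "Var (ham_coeff m) M (sorted_insertion xs) / Var (ham_coeff m) M (light_first_grouping m)
           = (4 + real m) / 9"
  using assms by (simp add: Var_sorted_insertion_ham Var_light_first_grouping)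

theorem lemma2:
  shows "\<exists>a b :: real. 0 < a \<and> 0 < b \<and>
    (\<forall>m0 :: nat. \<exists>m n T c. m \<ge> m0 \<and> pauli_hamiltonian n T c \<and>
       (\<forall>xs. sorted_order T c xs \<longrightarrow>
          length (sorted_insertion xs) = m \<and>
          (\<exists>G'. grouping T G' \<and>
             (\<forall>M :: real. M > 0 \<longrightarrow>
                a * real m \<le> Var c M (sorted_insertion xs) / Var c M G' \<and>
                Var c M (sorted_insertion xs) / Var c M G' \<le> b * real m))))"
proof (rule exI [of _ "1/9"], rule exI [of _ "5/9"], intro conjI allI)
  fix m0 :: nat
  define m where "m = Suc m0"
  then have "m > 0" "m \<ge> m0"
    by simp_all
  let ?ratio = "\<lambda>xs M. Var (ham_coeff m) M (sorted_insertion xs)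
                        / Var (ham_coeff m) M (light_first_grouping m)"
  have "length (sorted_insertion xs) = m \<and> grouping (ham_terms m) (light_first_grouping m) \<and>
      (\<forall>M :: real. M > 0 \<longrightarrow> 1/9 * real m \<le> ?ratio xs M \<and> ?ratio xs M \<le> 5/9 * real m)"
    if "sorted_order (ham_terms m) (ham_coeff m) xs" for xs
    using that \<open>m > 0\<close>
    by (simp add: length_sorted_insertion_ham grouping_light_first_grouping Var_ratio_ham)
  then show "\<exists>m n T c. m \<ge> m0 \<and> pauli_hamiltonian n T c \<and>
       (\<forall>xs. sorted_order T c xs \<longrightarrow>
          length (sorted_insertion xs) = m \<and>
          (\<exists>G'. grouping T G' \<and>
             (\<forall>M :: real. M > 0 \<longrightarrow>
                1/9 * real m \<le> Var c M (sorted_insertion xs) / Var c M G' \<and>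
                Var c M (sorted_insertion xs) / Var c M G' \<le> 5/9 * real m)))"
    using \<open>m \<ge> m0\<close> pauli_hamiltonian_ham [OF \<open>m > 0\<close>] by blast
qed simp_all

end
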